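(* In the public goods model, every MNW allocation is Pareto-optimal, satisfies Prop1, and satisfies $\frac1n$-RRS. Further, when $k\ge n$, every MNW allocation satisfies $\frac{1}{2n-1}$-Prop.
   Context: Public goods model: agents $[n]$, goods $G=[m]$, integer $0\le k\le m$, nonnegative integer additive values $v_{ij}$ ($v_i(S)=\sum_{j\in S}v_{ij}$), every agent having some good with $v_{ij}>0$. An allocation is $x\subseteq G$ with $|x|\le k$. $\mathrm{NW}(x)=(\prod_i v_i(x))^{1/n}$; an MNW allocation maximizes NW over allocations, where if all allocations have NW $0$, an MNW allocation maximizes the number of agents with positive utility and, subject to that, the product of positive utilities. $y$ Pareto-dominates $x$ if $v_i(y)\ge v_i(x)$ for all $i$ with at least one strict; $x$ is Pareto-optimal if no allocation Pareto-dominates it. $\mathrm{Prop}_i=\frac1n\max_{|y|\le k}v_i(y)$ and $\mathrm{RRS}_i=\max_{|y|\le\lfloor k/n\rfloor}v_i(y)$. For $\alpha\in(0,1]$: $x$ is $\alpha$-Prop if $v_i(x)\ge\alpha\,\mathrm{Prop}_i$ for all $i$; $x$ is $\alpha$-RRS if $v_i(x)\ge\alpha\,\mathrm{RRS}_i$ for all $i$; $x$ is Prop1 if for every agent $i$ there exist $g\in x$ and $g'\in G$ with $v_i((x\setminus\{g\})\cup\{g'\})\ge\mathrm{Prop}_i$. *)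

theory Defs
  imports Complex_Main
begin

definition util :: "(nat \<Rightarrow> nat \<Rightarrow> nat) \<Rightarrow> nat \<Rightarrow> nat set \<Rightarrow> nat" where
  "util v i S = (\<Sum>j\<in>S. v i j)"

definition allocs :: "nat \<Rightarrow> nat \<Rightarrow> nat set set" where
  "allocs m k = {x. x \<subseteq> {..<m} \<and> card x \<le> k}"

definition NW :: "nat \<Rightarrow> (nat \<Rightarrow> nat \<Rightarrow> nat) \<Rightarrow> nat set \<Rightarrow> real" where
  "NW n v x = root n (\<Prod>i<n. real (util v i x))"

definition pos_agents :: "nat \<Rightarrow> (nat \<Rightarrow> nat \<Rightarrow> nat) \<Rightarrow> nat set \<Rightarrow> nat set" where
  "pos_agents n v x = {i. i < n \<and> util v i x > 0}"

definition MNW :: "nat \<Rightarrow> nat \<Rightarrow> nat \<Rightarrow> (nat \<Rightarrow> nat \<Rightarrow> nat) \<Rightarrow> nat set \<Rightarrow> bool" where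
  "MNW n m k v x \<longleftrightarrow> x \<in> allocs m k \<and>
     (if \<exists>y\<in>allocs m k. NW n v y > 0
      then (\<forall>y\<in>allocs m k. NW n v y \<le> NW n v x)
      else (\<forall>y\<in>allocs m k.
              card (pos_agents n v y) \<le> card (pos_agents n v x) \<and>
              (card (pos_agents n v y) = card (pos_agents n v x) \<longrightarrow>
                 (\<Prod>i\<in>pos_agents n v y. util v i y) \<le> (\<Prod>i\<in>pos_agents n v x. util v i x))))"

definition pareto_dominates :: "nat \<Rightarrow> (nat \<Rightarrow> nat \<Rightarrow> nat) \<Rightarrow> nat set \<Rightarrow> nat set \<Rightarrow> bool" where
  "pareto_dominates n v y x \<longleftrightarrow>
     (\<forall>i<n. util v i y \<ge> util v i x) \<and> (\<exists>i<n. util v i y > util v i x)"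

definition pareto_optimal :: "nat \<Rightarrow> nat \<Rightarrow> nat \<Rightarrow> (nat \<Rightarrow> nat \<Rightarrow> nat) \<Rightarrow> nat set \<Rightarrow> bool" where
  "pareto_optimal n m k v x \<longleftrightarrow> \<not> (\<exists>y\<in>allocs m k. pareto_dominates n v y x)"

definition Prop_share :: "nat \<Rightarrow> nat \<Rightarrow> nat \<Rightarrow> (nat \<Rightarrow> nat \<Rightarrow> nat) \<Rightarrow> nat \<Rightarrow> real" where
  "Prop_share n m k v i = (1 / real n) * real (Max ((\<lambda>y. util v i y) ` allocs m k))"

definition RRS :: "nat \<Rightarrow> nat \<Rightarrow> nat \<Rightarrow> (nat \<Rightarrow> nat \<Rightarrow> nat) \<Rightarrow> nat \<Rightarrow> real" where
  "RRS n m k v i = real (Max ((\<lambda>y. util v i y) ` allocs m (k div n)))"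

definition alpha_Prop :: "real \<Rightarrow> nat \<Rightarrow> nat \<Rightarrow> nat \<Rightarrow> (nat \<Rightarrow> nat \<Rightarrow> nat) \<Rightarrow> nat set \<Rightarrow> bool" where
  "alpha_Prop \<alpha> n m k v x \<longleftrightarrow> (\<forall>i<n. real (util v i x) \<ge> \<alpha> * Prop_share n m k v i)"

definition alpha_RRS :: "real \<Rightarrow> nat \<Rightarrow> nat \<Rightarrow> nat \<Rightarrow> (nat \<Rightarrow> nat \<Rightarrow> nat) \<Rightarrow> nat set \<Rightarrow> bool" where
  "alpha_RRS \<alpha> n m k v x \<longleftrightarrow> (\<forall>i<n. real (util v i x) \<ge> \<alpha> * RRS n m k v i)"

definition Prop1 :: "nat \<Rightarrow> nat \<Rightarrow> nat \<Rightarrow> (nat \<Rightarrow> nat \<Rightarrow> nat) \<Rightarrow> nat set \<Rightarrow> bool" where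
  "Prop1 n m k v x \<longleftrightarrow> (\<forall>i<n.
     real (util v i x) \<ge> Prop_share n m k v i \<or>
     (\<exists>g\<in>x. \<exists>g'\<in>{..<m}. real (util v i ((x - {g}) \<union> {g'})) \<ge> Prop_share n m k v i))"

end

theory Submission
  imports Defs "HOL-Analysis.Infinite_Products"
begin

(* Suppose every agent has positive utility u_j(x) at the product-maximising allocation x, and
   give each good g of x the weight w_i(g) = (sum over j <> i of v_j(g) / u_j(x)). Replacing a set
   E of goods of x by other goods costs each agent j <> i at most the fraction u_j(E) / u_j(x) of
   its utility, so maximality of the product and 1 - sum a_j <= prod (1 - a_j) give
   u_i(new) * (1 - sum of w_i over E) <= u_i(x); the weights of all goods of x add up to n - 1.
   If x leaves a slot free, no good can raise anybody's utility. Otherwise: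
   - if every single swap leaves agent i below Prop_i, exchanging each good of x outside i's best
     bundle S for the best good of S outside x and summing gives u_i(S) <= u_i(x) + (n - 1) Prop_i,
     i.e. u_i(x) >= Prop_i; this is Prop1;
   - for i's best bundle R of size floor(k/n), x - R has at least n |R - x| goods, so a lightest
     |R - x| of them weigh at most (n - 1)/n; exchanging them for R - x gives 1/n-RRS;
   - k <= (2n - 1) floor(k/n), and a bundle of k goods is worth at most k/q times the best bundle
     of q goods, so Prop_i <= (2n - 1) RRS_i / n, which turns 1/n-RRS into 1/(2n-1)-Prop.
   If no allocation gives everybody positive utility then k < n, so RRS_i = 0, and Prop1 follows by
   swapping in the agent's favourite good. Pareto optimality is immediate from either objective. *)

lemma util_empty [simp]: "util v i {} = 0"
  by (simp add: util_def)

lemma util_singleton [simp]: "util v i {g} = v i g"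
  by (simp add: util_def)

lemma util_union_disjoint:
  "finite A \<Longrightarrow> finite B \<Longrightarrow> A \<inter> B = {} \<Longrightarrow> util v i (A \<union> B) = util v i A + util v i B"
  unfolding util_def by (rule sum.union_disjoint)

lemma util_mono: "finite B \<Longrightarrow> A \<subseteq> B \<Longrightarrow> util v i A \<le> util v i B"
  unfolding util_def by (simp add: sum_mono2)

lemma util_Diff_Int: "finite B \<Longrightarrow> util v i B = util v i (B - A) + util v i (B \<inter> A)"
  unfolding util_def by (simp add: sum.Int_Diff[of B _ A] add.commute)

lemma util_le_card_mult: "(\<And>j. j \<in> S \<Longrightarrow> v i j \<le> a) \<Longrightarrow> util v i S \<le> card S * a"
  unfolding util_def using sum_bounded_above[of S "v i" a] by simp

lemma finite_allocs: "finite (allocs m k)"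
  by (rule finite_subset[of _ "Pow {..<m}"]) (auto simp: allocs_def)

lemma alloc_finite: "y \<in> allocs m k \<Longrightarrow> finite y"
  unfolding allocs_def by (auto intro: finite_subset)

lemma allocs_zero: "allocs m 0 = {{}}"
  unfolding allocs_def by (auto simp: card_eq_0_iff dest: finite_subset[OF _ finite_lessThan])

lemma obtain_arg_max:
  fixes f :: "'a \<Rightarrow> 'b::linorder"
  assumes "finite A" "A \<noteq> {}"
  obtains a where "a \<in> A" "\<And>b. b \<in> A \<Longrightarrow> f b \<le> f a"
proof -
  have "Max (f ` A) \<in> f ` A" using assms by simp
  then obtain a where "a \<in> A" "f a = Max (f ` A)" by auto
  then show thesis using assms by (intro that) auto
qed

definition best_util :: "nat \<Rightarrow> nat \<Rightarrow> (nat \<Rightarrow> nat \<Rightarrow> nat) \<Rightarrow> nat \<Rightarrow> nat" where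
  "best_util m k v i = Max ((\<lambda>y. util v i y) ` allocs m k)"

lemma Prop_share_eq: "Prop_share n m k v i = real (best_util m k v i) / real n"
  by (simp add: Prop_share_def best_util_def)

lemma RRS_eq: "RRS n m k v i = real (best_util m (k div n) v i)"
  by (simp add: RRS_def best_util_def)

lemma best_util_ge: "y \<in> allocs m k \<Longrightarrow> util v i y \<le> best_util m k v i"
  unfolding best_util_def by (rule Max_ge) (simp_all add: finite_allocs)

lemma best_util_attained:
  obtains S where "S \<in> allocs m k" "util v i S = best_util m k v i"
proof -
  have "{} \<in> allocs m k" by (simp add: allocs_def)
  then have "best_util m k v i \<in> (\<lambda>y. util v i y) ` allocs m k"
    unfolding best_util_def by (intro Max_in) (auto simp: finite_allocs)
  then show thesis using that by auto
qed

lemma best_util_zero [simp]: "best_util m 0 v i = 0"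
  by (simp add: best_util_def allocs_zero)

lemma best_util_le_card_mult:
  assumes "\<And>j. j < m \<Longrightarrow> v i j \<le> a"
  shows "best_util m k v i \<le> k * a"
proof -
  obtain S where S: "S \<in> allocs m k" "util v i S = best_util m k v i"
    by (rule best_util_attained)
  then have "util v i S \<le> card S * a" using assms by (intro util_le_card_mult) (auto simp: allocs_def)
  also have "\<dots> \<le> k * a" using S(1) by (simp add: allocs_def)
  finally show ?thesis using S(2) by simp
qed

lemma obtain_remove_sum_le:
  fixes f :: "'a \<Rightarrow> real"
  assumes "finite X" "X \<noteq> {}"
  obtains z where "z \<in> X" "real (card X) * sum f (X - {z}) \<le> (real (card X) - 1) * sum f X"
proof -
  obtain z where z: "z \<in> X" "\<And>a. a \<in> X \<Longrightarrow> f a \<le> f z"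
    using obtain_arg_max[OF assms, of f] by blast
  have "real (card X) * sum f (X - {z}) = real (card X) * sum f X - real (card X) * f z"
    using assms z(1) by (simp add: sum_diff1 right_diff_distrib)
  also have "\<dots> \<le> real (card X) * sum f X - sum f X"
    using sum_bounded_above[of X f "f z"] z(2) by simp
  also have "\<dots> = (real (card X) - 1) * sum f X" by (simp add: algebra_simps)
  finally show thesis by (rule that[OF z(1)])
qed

lemma exists_subset_sum_le_average:
  fixes f :: "'a \<Rightarrow> real"
  assumes "finite X" "r \<le> card X"
  shows "\<exists>E\<subseteq>X. card E = r \<and> real (card X) * sum f E \<le> real r * sum f X"
  using assms
proof (induction "card X - r" arbitrary: X)
  case 0
  then show ?case by (intro exI[of _ X]) auto
next
  case (Suc d)
  show ?case
  proof (cases "r = 0")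
    case True
    then show ?thesis by (intro exI[of _ "{}"]) auto
  next
    case False
    have "X \<noteq> {}" using Suc by auto
    then obtain z where z: "z \<in> X"
      and remove: "real (card X) * sum f (X - {z}) \<le> (real (card X) - 1) * sum f X"
      using obtain_remove_sum_le[OF Suc.prems(1)] by blast
    define c where "c = real (card X)"
    have c: "c - 1 > 0" using Suc False unfolding c_def by linarith
    have card_z: "card (X - {z}) = card X - 1" using z(1) Suc.prems(1) by simp
    then have "d = card (X - {z}) - r" "r \<le> card (X - {z})" using Suc.hyps(2) by auto
    then obtain E where E: "E \<subseteq> X - {z}" "card E = r"
      and avg: "real (card X - 1) * sum f E \<le> real r * sum f (X - {z})"
      using Suc.hyps(1)[of "X - {z}"] Suc.prems(1) card_z by auto
    have "real (card X - 1) = c - 1" using c unfolding c_def by (simp add: of_nat_diff)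
    with avg have "(c - 1) * sum f E \<le> real r * sum f (X - {z})" by simp
    have "(c - 1) * (c * sum f E) = c * ((c - 1) * sum f E)" by (simp add: algebra_simps)
    also have "\<dots> \<le> c * (real r * sum f (X - {z}))"
      using \<open>(c - 1) * sum f E \<le> _\<close> c by (intro mult_left_mono) auto
    also have "\<dots> \<le> (c - 1) * (real r * sum f X)"
      using mult_left_mono[OF remove, of "real r"] unfolding c_def by (simp add: algebra_simps)
    finally have "c * sum f E \<le> real r * sum f X" using c by simp
    then show ?thesis using E unfolding c_def by blast
  qed
qed

lemma exists_subset_sum_ge_average:
  fixes f :: "'a \<Rightarrow> real"
  assumes "finite X" "r \<le> card X"
  shows "\<exists>E\<subseteq>X. card E = r \<and> real r * sum f X \<le> real (card X) * sum f E"
  using exists_subset_sum_le_average[OF assms, of "\<lambda>a. - f a"] by (simp add: sum_negf)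

lemma best_util_scaling:
  assumes "q \<le> k"
  shows "q * best_util m k v i \<le> k * best_util m q v i"
proof -
  obtain S where S: "S \<in> allocs m k" "util v i S = best_util m k v i"
    by (rule best_util_attained)
  have S_sub: "S \<subseteq> {..<m}" and S_card: "card S \<le> k" using S(1) by (auto simp: allocs_def)
  show ?thesis
  proof (cases "card S \<le> q")
    case True
    then have "util v i S \<le> best_util m q v i"
      using S_sub by (intro best_util_ge) (simp add: allocs_def)
    then show ?thesis using S(2) assms by (simp add: mult_le_mono)
  next
    case False
    obtain E where E: "E \<subseteq> S" "card E = q"
      and avg: "real q * (\<Sum>g\<in>S. real (v i g)) \<le> real (card S) * (\<Sum>g\<in>E. real (v i g))"
      using exists_subset_sum_ge_average[of S q] alloc_finite[OF S(1)] False by auto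
    have "q * util v i S \<le> card S * util v i E"
      using avg unfolding util_def by (simp flip: of_nat_sum of_nat_mult)
    also have "\<dots> \<le> k * best_util m q v i"
      using E S_sub S_card by (intro mult_mono best_util_ge) (auto simp: allocs_def)
    finally show ?thesis using S(2) by simp
  qed
qed

lemma le_two_mult_minus_one_mult_div:
  fixes n k :: nat
  assumes "0 < n" "n \<le> k"
  shows "k \<le> (2 * n - 1) * (k div n)"
proof -
  have q: "0 < k div n" using assms by (simp add: div_greater_zero_iff)
  have "k mod n \<le> n - 1" using mod_less_divisor[OF assms(1), of k] by linarith
  also have "\<dots> \<le> (n - 1) * (k div n)" using q by simp
  finally have "k \<le> n * (k div n) + (n - 1) * (k div n)"
    using mult_div_mod_eq[of n k] by linarith
  also have "\<dots> = (2 * n - 1) * (k div n)"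
    using assms(1) by (simp add: algebra_simps diff_mult_distrib)
  finally show ?thesis .
qed

lemma best_util_le_mult_best_util_div:
  assumes "0 < n" "n \<le> k"
  shows "best_util m k v i \<le> (2 * n - 1) * best_util m (k div n) v i"
proof -
  let ?q = "k div n"
  have "?q * best_util m k v i \<le> k * best_util m ?q v i" by (rule best_util_scaling) simp
  also have "\<dots> \<le> ((2 * n - 1) * ?q) * best_util m ?q v i"
    using le_two_mult_minus_one_mult_div[OF assms] by (rule mult_right_mono) simp
  finally have "?q * best_util m k v i \<le> ?q * ((2 * n - 1) * best_util m ?q v i)"
    by (simp add: ac_simps)
  moreover have "0 < ?q" using assms by (simp add: div_greater_zero_iff)
  ultimately show ?thesis by simp
qed

lemma factor_bound_from_prod_le:
  fixes U W A :: "'a \<Rightarrow> real"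
  assumes N: "finite N"
    and U: "\<And>j. j \<in> N \<Longrightarrow> 0 < U j"
    and A: "\<And>j. j \<in> N \<Longrightarrow> 0 \<le> A j \<and> A j \<le> U j \<and> U j - A j \<le> W j"
    and w: "0 \<le> w"
    and prod: "w * prod W N \<le> u * prod U N"
  shows "w * (1 - (\<Sum>j\<in>N. A j / U j)) \<le> u"
proof -
  have PU: "0 < prod U N" using U by (rule prod_pos)
  have "prod U N * (1 - (\<Sum>j\<in>N. A j / U j)) \<le> prod U N * (\<Prod>j\<in>N. 1 - A j / U j)"
    using PU A U by (intro mult_left_mono Weierstrass_prod_ineq) (auto simp: field_simps)
  also have "\<dots> = (\<Prod>j\<in>N. U j - A j)"
  proof -
    have "U j * (1 - A j / U j) = U j - A j" if "j \<in> N" for j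
      using U[OF that] by (simp add: field_simps)
    then show ?thesis by (simp flip: prod.distrib)
  qed
  also have "\<dots> \<le> prod W N" using A by (intro prod_mono) auto
  finally have "w * (prod U N * (1 - (\<Sum>j\<in>N. A j / U j))) \<le> w * prod W N"
    using w by (rule mult_left_mono)
  also have "\<dots> \<le> u * prod U N" by (rule prod)
  finally show ?thesis using PU by (simp add: ac_simps)
qed

lemma mult_card_Diff_le_card_Diff:
  assumes "finite A" "finite B" "card A \<le> q" "n * q \<le> card B"
  shows "n * card (A - B) \<le> card (B - A)"
proof (cases "n = 0")
  case False
  have "card A = card (A - B) + card (A \<inter> B)" "card B = card (B - A) + card (A \<inter> B)"
    using assms(1,2) card_Int_Diff[of A B] card_Int_Diff[of B A] by (simp_all add: Int_commute)
  moreover have "n * (card (A - B) + card (A \<inter> B)) \<le> n * q" using assms(3) calculation by simp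
  moreover have "card (A \<inter> B) \<le> n * card (A \<inter> B)" using False by simp
  ultimately show ?thesis
    using assms(4) add_mult_distrib2[of n "card (A - B)" "card (A \<inter> B)"] by linarith
qed simp

lemma NW_le_NW_iff:
  "0 < n \<Longrightarrow> NW n v y \<le> NW n v x \<longleftrightarrow> (\<Prod>i<n. util v i y) \<le> (\<Prod>i<n. util v i x)"
  unfolding NW_def by (simp flip: of_nat_prod)

lemma NW_pos_iff: "0 < n \<Longrightarrow> 0 < NW n v x \<longleftrightarrow> (\<forall>i<n. 0 < util v i x)"
  using real_root_less_iff[of n 0] unfolding NW_def by (simp flip: of_nat_prod add: Ball_def)

lemma exists_NW_pos_if_n_le_k:
  assumes n: "0 < n" "n \<le> k" and liked: "\<forall>i<n. \<exists>j<m. 0 < v i j"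
  shows "\<exists>y\<in>allocs m k. 0 < NW n v y"
proof -
  obtain c where c: "\<And>i. i < n \<Longrightarrow> c i < m \<and> 0 < v i (c i)" using liked by metis
  have "c ` {..<n} \<in> allocs m k"
    using c n(2) card_image_le[of "{..<n}" c] by (auto simp: allocs_def)
  moreover have "0 < util v i (c ` {..<n})" if "i < n" for i
  proof -
    have "v i (c i) \<le> util v i (c ` {..<n})"
      using util_mono[of "c ` {..<n}" "{c i}" v i] that by simp
    then show ?thesis using c[OF that] by linarith
  qed
  ultimately show ?thesis using n(1) by (auto simp: NW_pos_iff)
qed

lemma prod_pos_agents_less_if_dominates:
  assumes dom: "pareto_dominates n v y x" and same: "pos_agents n v x = pos_agents n v y"
  shows "(\<Prod>i\<in>pos_agents n v x. util v i x) < (\<Prod>i\<in>pos_agents n v y. util v i y)"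
proof -
  obtain i0 where "i0 < n" "util v i0 x < util v i0 y" using dom by (auto simp: pareto_dominates_def)
  then have "i0 \<in> pos_agents n v x" using same by (auto simp: pos_agents_def)
  then show ?thesis unfolding same[symmetric] using dom \<open>util v i0 x < _\<close>
    by (intro prod_mono_strict) (auto simp: pareto_dominates_def pos_agents_def)
qed

lemma MNW_pareto_optimal:
  assumes n: "0 < n" and mnw: "MNW n m k v x"
  shows "pareto_optimal n m k v x"
  unfolding pareto_optimal_def
proof
  assume "\<exists>y\<in>allocs m k. pareto_dominates n v y x"
  then obtain y where y: "y \<in> allocs m k" and dom: "pareto_dominates n v y x" by blast
  have sub: "pos_agents n v x \<subseteq> pos_agents n v y"
    using dom by (force simp: pos_agents_def pareto_dominates_def)
  show False
  proof (cases "\<exists>y\<in>allocs m k. 0 < NW n v y")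
    case True
    then have opt: "\<forall>y\<in>allocs m k. NW n v y \<le> NW n v x" using mnw by (simp add: MNW_def)
    then have le: "NW n v y \<le> NW n v x" and "0 < NW n v x" using True y by force+
    then have "pos_agents n v x = {..<n}" using n by (auto simp: NW_pos_iff pos_agents_def)
    moreover have "pos_agents n v y \<subseteq> {..<n}" by (auto simp: pos_agents_def)
    ultimately have "(\<Prod>i<n. util v i x) < (\<Prod>i<n. util v i y)"
      using prod_pos_agents_less_if_dominates[OF dom] sub by force
    with le show False using n by (simp add: NW_le_NW_iff)
  next
    case False
    then have "card (pos_agents n v y) \<le> card (pos_agents n v x)"
      and le: "card (pos_agents n v y) = card (pos_agents n v x) \<Longrightarrow>
        (\<Prod>i\<in>pos_agents n v y. util v i y) \<le> (\<Prod>i\<in>pos_agents n v x. util v i x)"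
      using mnw y by (auto simp: MNW_def)
    then have "pos_agents n v x = pos_agents n v y"
      using sub by (intro card_seteq) (auto simp: pos_agents_def)
    then show False using prod_pos_agents_less_if_dominates[OF dom] le by fastforce
  qed
qed

locale nash_optimum =
  fixes n m k :: nat and v :: "nat \<Rightarrow> nat \<Rightarrow> nat" and x :: "nat set"
  assumes alloc: "x \<in> allocs m k"
    and util_pos: "\<And>j. j < n \<Longrightarrow> 0 < util v j x"
    and prod_util_max: "\<And>y. y \<in> allocs m k \<Longrightarrow> (\<Prod>j<n. util v j y) \<le> (\<Prod>j<n. util v j x)"
begin

lemma finite_alloc: "finite x"
  using alloc by (rule alloc_finite)

definition nash_weight :: "nat \<Rightarrow> nat \<Rightarrow> real" where
  "nash_weight i g = (\<Sum>j\<in>{..<n} - {i}. real (v j g) / real (util v j x))"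

lemma nash_weight_nonneg: "0 \<le> nash_weight i g"
  unfolding nash_weight_def by (intro sum_nonneg) simp

lemma sum_nash_weight:
  "finite E \<Longrightarrow>
    (\<Sum>g\<in>E. nash_weight i g) = (\<Sum>j\<in>{..<n} - {i}. real (util v j E) / real (util v j x))"
  unfolding nash_weight_def util_def by (subst sum.swap) (simp add: sum_divide_distrib)

lemma sum_nash_weight_le:
  assumes i: "i < n" and X: "X \<subseteq> x"
  shows "(\<Sum>g\<in>X. nash_weight i g) \<le> real n - 1"
proof -
  have "(\<Sum>g\<in>X. nash_weight i g) \<le> (\<Sum>g\<in>x. nash_weight i g)"
    using finite_alloc X nash_weight_nonneg by (intro sum_mono2) auto
  also have "\<dots> = (\<Sum>j\<in>{..<n} - {i}. 1)"
    unfolding sum_nash_weight[OF finite_alloc] using util_pos by (intro sum.cong) auto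
  also have "\<dots> = real n - 1" using i by (simp add: of_nat_diff)
  finally show ?thesis .
qed

lemma exchange_bound:
  assumes i: "i < n" and E: "E \<subseteq> x" and y: "(x - E) \<union> D \<in> allocs m k"
  shows "real (util v i ((x - E) \<union> D)) * (1 - (\<Sum>g\<in>E. nash_weight i g)) \<le> real (util v i x)"
proof -
  let ?y = "(x - E) \<union> D" and ?N = "{..<n} - {i}"
  have fE: "finite E" using E finite_alloc by (rule finite_subset)
  have "real (util v j x) - real (util v j E) \<le> real (util v j ?y)" for j
  proof -
    have "util v j x = util v j (x - E) + util v j E"
      using util_Diff_Int[OF finite_alloc, of v j E] E by (simp add: Int_absorb1)
    moreover have "util v j (x - E) \<le> util v j ?y" using alloc_finite[OF y] by (intro util_mono) auto
    ultimately show ?thesis by simp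
  qed
  moreover have "util v j E \<le> util v j x" for j using finite_alloc E by (rule util_mono)
  moreover have "(\<Prod>j<n. real (util v j ?y)) \<le> (\<Prod>j<n. real (util v j x))"
    using prod_util_max[OF y] by (simp flip: of_nat_prod)
  then have "real (util v i ?y) * (\<Prod>j\<in>?N. real (util v j ?y))
      \<le> real (util v i x) * (\<Prod>j\<in>?N. real (util v j x))"
    using i by (simp add: prod.remove)
  ultimately have "real (util v i ?y) * (1 - (\<Sum>j\<in>?N. real (util v j E) / real (util v j x)))
      \<le> real (util v i x)"
    using util_pos by (intro factor_bound_from_prod_le) auto
  then show ?thesis by (simp add: sum_nash_weight[OF fE])
qed

lemma util_le_if_card_less:
  assumes full: "card x < k" and i: "i < n" and S: "S \<subseteq> {..<m}"
  shows "util v i S \<le> util v i x"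
proof -
  have "v i g = 0" if g: "g \<in> S - x" for g
  proof -
    have "(x - {}) \<union> {g} \<in> allocs m k"
      using alloc full g S finite_alloc by (auto simp: allocs_def)
    from exchange_bound[OF i _ this] have "util v i (insert g x) \<le> util v i x" by simp
    then show ?thesis using g finite_alloc by (simp add: util_def)
  qed
  then have "util v i (S - x) = 0" by (simp add: util_def)
  moreover have "util v i (S \<inter> x) \<le> util v i x" using finite_alloc by (rule util_mono) auto
  ultimately show ?thesis
    using util_Diff_Int[of S v i x] S by (metis add_0 finite_lessThan finite_subset)
qed

lemma swap_gain_le:
  assumes i: "i < n" and g: "g \<in> x" and g': "g' < m" "g' \<notin> x"
  shows "real (v i g') - real (v i g) \<le> nash_weight i g * real (util v i ((x - {g}) \<union> {g'}))"
proof -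
  let ?y = "(x - {g}) \<union> {g'}"
  have "0 < card x" using g finite_alloc card_gt_0_iff by blast
  then have "card ?y = card x" using g g' finite_alloc by (simp add: card_insert_if)
  then have "?y \<in> allocs m k" using alloc g' by (auto simp: allocs_def)
  then have "real (util v i ?y) * (1 - nash_weight i g) \<le> real (util v i x)"
    using exchange_bound[OF i, of "{g}" "{g'}"] g by simp
  moreover have "util v i ?y + v i g = util v i x + v i g'"
    using util_Diff_Int[OF finite_alloc, of v i "{g}"] util_union_disjoint[of "x - {g}" "{g'}" v i]
      g g' finite_alloc by auto
  ultimately show ?thesis by (simp add: algebra_simps)
qed

lemma util_le_if_swaps_le:
  assumes i: "i < n" and full: "card x = k" and S: "S \<in> allocs m k" and P: "0 \<le> P"
    and swaps: "\<And>g g'. g \<in> x \<Longrightarrow> g' \<in> S - x \<Longrightarrow> real (util v i ((x - {g}) \<union> {g'})) \<le> P"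
  shows "real (util v i S) \<le> real (util v i x) + (real n - 1) * P"
proof (cases "S \<subseteq> x")
  case True
  then have "util v i S \<le> util v i x" using finite_alloc by (intro util_mono)
  moreover have "0 \<le> (real n - 1) * P" using i P by (intro mult_nonneg_nonneg) auto
  ultimately show ?thesis by linarith
next
  case False
  have fS: "finite S" using S by (rule alloc_finite)
  obtain g0 where g0: "g0 \<in> S - x" and g0_max: "\<And>g. g \<in> S - x \<Longrightarrow> v i g \<le> v i g0"
    using obtain_arg_max[of "S - x" "v i"] fS False by blast
  have g0': "g0 < m" "g0 \<notin> x" using g0 S by (auto simp: allocs_def)
  have gain: "real (v i g0) - real (v i g) \<le> nash_weight i g * P" if g: "g \<in> x" for g
  proof -
    have "nash_weight i g * real (util v i ((x - {g}) \<union> {g0})) \<le> nash_weight i g * P"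
      using swaps[OF g g0] nash_weight_nonneg by (rule mult_left_mono)
    then show ?thesis using swap_gain_le[OF i g g0'] by linarith
  qed
  let ?X = "x - S"
  have "real (card ?X) * real (v i g0) - real (util v i ?X) = (\<Sum>g\<in>?X. real (v i g0) - real (v i g))"
    by (simp add: util_def sum_subtractf)
  also have "\<dots> \<le> (\<Sum>g\<in>?X. nash_weight i g) * P"
    unfolding sum_distrib_right using gain by (intro sum_mono) auto
  also have "\<dots> \<le> (real n - 1) * P" using sum_nash_weight_le[OF i] P by (intro mult_right_mono) auto
  finally have swap_total: "real (card ?X) * real (v i g0) \<le> real (util v i ?X) + (real n - 1) * P"
    by simp
  have "card (S - x) \<le> card ?X"
    using mult_card_Diff_le_card_Diff[of S x k 1] fS finite_alloc S full by (simp add: allocs_def)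
  then have "util v i (S - x) \<le> card ?X * v i g0"
    using util_le_card_mult[of "S - x" v i "v i g0"] g0_max by (meson le_trans mult_le_mono1)
  then have "real (util v i (S - x)) \<le> real (card ?X) * real (v i g0)"
    by (metis of_nat_le_iff of_nat_mult)
  moreover have "real (util v i S) = real (util v i (S - x)) + real (util v i (x \<inter> S))"
    using util_Diff_Int[OF fS, of v i x] by (simp add: Int_commute)
  moreover have "real (util v i x) = real (util v i ?X) + real (util v i (x \<inter> S))"
    using util_Diff_Int[OF finite_alloc, of v i S] by simp
  ultimately show ?thesis using swap_total by linarith
qed

lemma Prop1: "Prop1 n m k v x"
  unfolding Prop1_def
proof (intro allI impI)
  fix i assume i: "i < n"
  let ?P = "Prop_share n m k v i"
  show "?P \<le> real (util v i x) \<or> (\<exists>g\<in>x. \<exists>g'\<in>{..<m}. ?P \<le> real (util v i ((x - {g}) \<union> {g'})))"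
  proof (rule disjCI)
    assume "\<not> (\<exists>g\<in>x. \<exists>g'\<in>{..<m}. ?P \<le> real (util v i ((x - {g}) \<union> {g'})))"
    then have swaps: "real (util v i ((x - {g}) \<union> {g'})) \<le> ?P" if "g \<in> x" "g' < m" for g g'
      using that by force
    obtain S where S: "S \<in> allocs m k" "util v i S = best_util m k v i" by (rule best_util_attained)
    have nP: "real n * ?P = real (util v i S)" using i S(2) by (simp add: Prop_share_eq)
    have P: "0 \<le> ?P" by (simp add: Prop_share_eq)
    have "real n * ?P \<le> real (util v i x) + (real n - 1) * ?P"
    proof (cases "card x < k")
      case True
      then have "util v i S \<le> util v i x" using util_le_if_card_less i S(1) by (simp add: allocs_def)
      moreover have "0 \<le> (real n - 1) * ?P" using i P by (intro mult_nonneg_nonneg) auto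
      ultimately show ?thesis using nP by linarith
    next
      case False
      then have "card x = k" using alloc by (simp add: allocs_def)
      from util_le_if_swaps_le[OF i this S(1) P] show ?thesis
        using nP swaps S(1) by (auto simp: allocs_def)
    qed
    then show "?P \<le> real (util v i x)" by (simp add: algebra_simps)
  qed
qed

lemma obtain_light_subset:
  assumes i: "i < n" and X: "X \<subseteq> x" and r: "n * r \<le> card X"
  obtains E where "E \<subseteq> X" "card E = r" "real n * (\<Sum>g\<in>E. nash_weight i g) \<le> real n - 1"
proof -
  have fX: "finite X" using X finite_alloc by (rule finite_subset)
  have "1 * r \<le> n * r" using i by (intro mult_le_mono1) simp
  then have "r \<le> card X" using r by linarith
  then obtain E where E: "E \<subseteq> X" "card E = r"
    and avg: "real (card X) * (\<Sum>g\<in>E. nash_weight i g) \<le> real r * (\<Sum>g\<in>X. nash_weight i g)"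
    using exists_subset_sum_le_average[OF fX] by blast
  have "real (card X) * (\<Sum>g\<in>E. nash_weight i g) \<le> real r * (real n - 1)"
    using avg mult_left_mono[OF sum_nash_weight_le[OF i X], of "real r"] by linarith
  then have "real n * (real (card X) * (\<Sum>g\<in>E. nash_weight i g)) \<le> real n * (real r * (real n - 1))"
    by (rule mult_left_mono) simp
  also have "\<dots> = real (n * r) * (real n - 1)" by simp
  also have "\<dots> \<le> real (card X) * (real n - 1)"
    using r i by (intro mult_right_mono) (simp only: of_nat_le_iff, simp)
  finally have "real (card X) * (real n * (\<Sum>g\<in>E. nash_weight i g)) \<le> real (card X) * (real n - 1)"
    by (simp add: ac_simps)
  moreover have "E = {}" if "card X = 0" using E fX that by (auto intro: finite_subset)
  ultimately have "real n * (\<Sum>g\<in>E. nash_weight i g) \<le> real n - 1"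
    using i by (cases "card X = 0") (auto simp: mult_le_cancel_left_pos)
  with E show thesis by (rule that)
qed

lemma util_le_mult_util_if_card_bound:
  assumes i: "i < n" and full: "card x = k" and R: "R \<in> allocs m q" and q: "n * q \<le> k"
  shows "util v i R \<le> n * util v i x"
proof -
  have fR: "finite R" using R by (rule alloc_finite)
  define D where "D = R - x"
  have "n * card D \<le> card (x - R)"
    unfolding D_def using R q full fR finite_alloc
    by (intro mult_card_Diff_le_card_Diff) (auto simp: allocs_def)
  then obtain E where E: "E \<subseteq> x - R" "card E = card D"
    and light: "real n * (\<Sum>g\<in>E. nash_weight i g) \<le> real n - 1"
    using obtain_light_subset[OF i, of "x - R"] by blast
  let ?y = "(x - E) \<union> D"
  have Ex: "E \<subseteq> x" using E by auto
  have fE: "finite E" using Ex finite_alloc by (rule finite_subset)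
  have "card ?y \<le> card (x - E) + card D" by (rule card_Un_le)
  also have "\<dots> = k"
    using card_Diff_subset[OF fE Ex] card_mono[OF finite_alloc Ex] E(2) full by simp
  finally have y: "?y \<in> allocs m k" using alloc R by (auto simp: allocs_def D_def)
  have "util v i R \<le> util v i ?y"
  proof -
    have "util v i R = util v i D + util v i (R \<inter> x)"
      unfolding D_def using util_Diff_Int[OF fR] .
    also have "\<dots> = util v i (D \<union> (R \<inter> x))"
      using fR by (intro util_union_disjoint[symmetric]) (auto simp: D_def)
    also have "\<dots> \<le> util v i ?y"
      using E alloc_finite[OF y] by (intro util_mono) (auto simp: D_def)
    finally show ?thesis .
  qed
  then have "real (util v i R) \<le> real (util v i ?y)" by simp
  also have "\<dots> \<le> real (util v i ?y) * (real n * (1 - (\<Sum>g\<in>E. nash_weight i g)))"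
  proof -
    have "1 \<le> real n * (1 - (\<Sum>g\<in>E. nash_weight i g))" using light by (simp add: algebra_simps)
    from mult_left_mono[OF this, of "real (util v i ?y)"] show ?thesis by simp
  qed
  also have "\<dots> = real n * (real (util v i ?y) * (1 - (\<Sum>g\<in>E. nash_weight i g)))"
    by (simp add: ac_simps)
  also have "\<dots> \<le> real n * real (util v i x)"
    using exchange_bound[OF i _ y] E by (intro mult_left_mono) auto
  finally show ?thesis by (metis of_nat_le_iff of_nat_mult)
qed

lemma best_util_div_le:
  assumes i: "i < n"
  shows "best_util m (k div n) v i \<le> n * util v i x"
proof -
  obtain R where R: "R \<in> allocs m (k div n)" "util v i R = best_util m (k div n) v i"
    by (rule best_util_attained)
  show ?thesis
  proof (cases "card x < k")
    case True
    then have "util v i R \<le> util v i x" using util_le_if_card_less i R(1) by (simp add: allocs_def)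
    also have "\<dots> \<le> n * util v i x" using i by simp
    finally show ?thesis using R(2) by simp
  next
    case False
    then have "card x = k" using alloc by (simp add: allocs_def)
    with util_le_mult_util_if_card_bound[OF i _ R(1)] show ?thesis using R(2) by simp
  qed
qed

lemma alpha_RRS_one_div_n: "alpha_RRS (1 / real n) n m k v x"
  unfolding alpha_RRS_def RRS_eq
proof (intro allI impI)
  fix i assume i: "i < n"
  then have "real (best_util m (k div n) v i) \<le> real n * real (util v i x)"
    using best_util_div_le by (metis of_nat_le_iff of_nat_mult)
  then show "1 / real n * real (best_util m (k div n) v i) \<le> real (util v i x)"
    using i by (simp add: field_simps)
qed

lemma alpha_Prop_one_div_two_n_minus_one:
  assumes "n \<le> k"
  shows "alpha_Prop (1 / (2 * real n - 1)) n m k v x"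
  unfolding alpha_Prop_def Prop_share_eq
proof (intro allI impI)
  fix i assume i: "i < n"
  have "best_util m k v i \<le> (2 * n - 1) * best_util m (k div n) v i"
    using i assms by (intro best_util_le_mult_best_util_div) auto
  also have "\<dots> \<le> (2 * n - 1) * (n * util v i x)"
    using best_util_div_le[OF i] by simp
  finally have "real (best_util m k v i) \<le> real (2 * n - 1) * (real n * real (util v i x))"
    by (metis of_nat_le_iff of_nat_mult)
  moreover have "real (2 * n - 1) = 2 * real n - 1" using i by (simp add: of_nat_diff)
  ultimately show "1 / (2 * real n - 1) * (real (best_util m k v i) / real n) \<le> real (util v i x)"
    using i by (simp add: field_simps)
qed

end

lemma MNW_nash_optimum:
  assumes n: "0 < n" and mnw: "MNW n m k v x" and pos: "\<exists>y\<in>allocs m k. 0 < NW n v y"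
  shows "nash_optimum n m k v x"
proof
  show "x \<in> allocs m k" using mnw by (simp add: MNW_def)
  have opt: "\<forall>y\<in>allocs m k. NW n v y \<le> NW n v x" using mnw pos by (simp add: MNW_def)
  then show "(\<Prod>j<n. util v j y) \<le> (\<Prod>j<n. util v j x)" if "y \<in> allocs m k" for y
    using that n by (simp add: NW_le_NW_iff)
  have "0 < NW n v x" using opt pos by force
  then show "0 < util v j x" if "j < n" for j using n that by (simp add: NW_pos_iff)
qed

lemma MNW_nonempty:
  assumes n: "0 < n" and k: "0 < k" and liked: "\<exists>j<m. 0 < v 0 j" and mnw: "MNW n m k v x"
  shows "x \<noteq> {}"
proof
  assume x: "x = {}"
  obtain c where c: "c < m" "0 < v 0 c" using liked by blast
  have y: "{c} \<in> allocs m k" using c k by (simp add: allocs_def)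
  have NW0: "NW n v x = 0" using n x by (simp add: NW_def)
  show False
  proof (cases "\<exists>y\<in>allocs m k. 0 < NW n v y")
    case True
    then obtain y where "y \<in> allocs m k" "0 < NW n v y" by blast
    moreover have "\<forall>y\<in>allocs m k. NW n v y \<le> NW n v x" using mnw True by (simp add: MNW_def)
    ultimately show False using NW0 by force
  next
    case False
    have "0 < card (pos_agents n v {c})" using c n by (auto simp: pos_agents_def card_gt_0_iff)
    moreover have "pos_agents n v x = {}" using x by (simp add: pos_agents_def)
    ultimately show False using mnw y False by (auto simp: MNW_def)
  qed
qed

lemma Prop1_if_k_le_n:
  assumes k: "k \<le> n" and x: "x \<in> allocs m k" and nonempty: "0 < k \<Longrightarrow> x \<noteq> {}"
  shows "Prop1 n m k v x"
  unfolding Prop1_def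
proof (intro allI impI)
  fix i assume "i < n"
  show "Prop_share n m k v i \<le> real (util v i x) \<or>
    (\<exists>g\<in>x. \<exists>g'\<in>{..<m}. Prop_share n m k v i \<le> real (util v i ((x - {g}) \<union> {g'})))"
  proof (cases "k = 0")
    case True
    then show ?thesis by (simp add: Prop_share_eq)
  next
    case False
    then obtain g where g: "g \<in> x" using nonempty by auto
    then have "{..<m} \<noteq> {}" using x by (auto simp: allocs_def)
    then obtain h where h: "h < m" and h_max: "\<And>j. j < m \<Longrightarrow> v i j \<le> v i h"
      using obtain_arg_max[of "{..<m}" "v i"] by auto
    have "best_util m k v i \<le> n * v i h"
      using best_util_le_card_mult[of m v i "v i h" k] h_max k by (meson le_trans mult_le_mono1)
    then have "Prop_share n m k v i \<le> real (v i h)"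
      using \<open>i < n\<close> by (simp add: Prop_share_eq field_simps flip: of_nat_mult)
    also have "\<dots> \<le> real (util v i ((x - {g}) \<union> {h}))"
      using util_mono[of "(x - {g}) \<union> {h}" "{h}" v i] alloc_finite[OF x] by simp
    finally show ?thesis using g h by blast
  qed
qed

theorem theorem5:
  fixes n m k :: nat and v :: "nat \<Rightarrow> nat \<Rightarrow> nat" and x :: "nat set"
  assumes n_pos: "n \<ge> 1"
    and k_le: "k \<le> m"
    and nonzero: "\<forall>i<n. \<exists>j<m. v i j > 0"
    and mnw: "MNW n m k v x"
  shows "pareto_optimal n m k v x \<and> Prop1 n m k v x
         \<and> alpha_RRS (1 / real n) n m k v x
         \<and> (k \<ge> n \<longrightarrow> alpha_Prop (1 / (2 * real n - 1)) n m k v x)"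
proof -
  have n: "0 < n" using n_pos by simp
  have x: "x \<in> allocs m k" using mnw by (simp add: MNW_def)
  have pareto: "pareto_optimal n m k v x" using n mnw by (rule MNW_pareto_optimal)
  show ?thesis
  proof (cases "\<exists>y\<in>allocs m k. 0 < NW n v y")
    case True
    then interpret nash_optimum n m k v x using n mnw by (intro MNW_nash_optimum)
    show ?thesis using pareto Prop1 alpha_RRS_one_div_n alpha_Prop_one_div_two_n_minus_one by blast
  next
    case False
    then have k: "k < n" using exists_NW_pos_if_n_le_k[OF n _ nonzero] by (meson not_le)
    have "0 < k \<Longrightarrow> x \<noteq> {}" using MNW_nonempty[OF n _ _ mnw] nonzero n by blast
    then have "Prop1 n m k v x" using Prop1_if_k_le_n k x by simp
    moreover have "alpha_RRS (1 / real n) n m k v x" using k by (simp add: alpha_RRS_def RRS_eq)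
    ultimately show ?thesis using pareto k by simp
  qed
qed

end
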